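(* Let $N\in\mathbb{N}$ and $X_1,X_2\subseteq[N]$, $X=(X_1,X_2)$, and let $\mu=\mathbb{E}_{\sigma\sim S_N}[|X_\sigma|]$ (uniform $\sigma$). Then for every real $u\ge 6\mu$, $$\Pr_{\pi\sim S_N}\big[|X_\pi|\ge \mu+u\big]\le \exp\!\left(-\tfrac34 u\right).$$
   Context: For $\pi\in S_N$, $X_\pi=\{(i,j): i\in X_1,\ j\in X_2,\ \pi(i)=j\}$ is the set of $X$-pairs of $\pi$; $\pi\sim S_N$ denotes a uniformly random permutation. *)

theory Defs
  imports "HOL-Probability.Probability" "HOL-Combinatorics.Permutations"
begin

definition X_pairs :: "nat set \<Rightarrow> nat set \<Rightarrow> (nat \<Rightarrow> nat) \<Rightarrow> (nat \<times> nat) set" where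
  "X_pairs X1 X2 \<pi> = {(i, j). i \<in> X1 \<and> j \<in> X2 \<and> \<pi> i = j}"

definition unif_perm :: "nat \<Rightarrow> (nat \<Rightarrow> nat) pmf" where
  "unif_perm N = pmf_of_set {\<pi>. \<pi> permutes {1..N}}"

end

theory Submission
  imports Defs
begin

text \<open>A uniform permutation maps a fixed \<open>k\<close>-subset of \<open>[N]\<close> onto a uniform \<open>k\<close>-subset.
  Hence the mean is \<open>\<mu> = |X\<^sub>1| |X\<^sub>2| / N\<close>, and a fixed \<open>k\<close>-subset of \<open>X\<^sub>1\<close> lands inside \<open>X\<^sub>2\<close>
  with probability \<open>C(|X\<^sub>2|,k) / C(N,k) \<le> (|X\<^sub>2|/N)^k\<close>. A union bound over the
  \<open>C(|X\<^sub>1|,k) \<le> |X\<^sub>1|^k / k!\<close> such subsets gives \<open>Pr[|X\<^sub>\<pi>| \<ge> k] \<le> \<mu>^k / k!\<close>, which for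
  \<open>k \<ge> 7\<mu>\<close> is at most \<open>(e/7)^k \<le> exp (-3k/4)\<close>, since \<open>k^k / k! \<le> e^k\<close> and \<open>e^(7/4) < 7\<close>.\<close>

lemma permutes_exists_image_eq:
  assumes "finite S" "B \<subseteq> S" "B' \<subseteq> S" "card B = card B'"
  shows "\<exists>\<tau>. \<tau> permutes S \<and> \<tau> ` B = B'"
proof -
  obtain f where f: "bij_betw f B B'"
    using finite_same_card_bij assms by (meson finite_subset)
  have "card (S - B) = card (S - B')"
    using assms by (simp add: card_Diff_subset finite_subset)
  then obtain g where g: "bij_betw g (S - B) (S - B')"
    using finite_same_card_bij assms by (meson finite_Diff)
  define \<tau> where "\<tau> = (\<lambda>x. if x \<in> B then f x else if x \<in> S then g x else x)"
  have on_B: "bij_betw \<tau> B B'"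
    using f by (rule bij_betw_cong[THEN iffD1, rotated]) (simp add: \<tau>_def)
  have on_rest: "bij_betw \<tau> (S - B) (S - B')"
    using g by (rule bij_betw_cong[THEN iffD1, rotated]) (simp add: \<tau>_def)
  have "bij_betw \<tau> (B \<union> (S - B)) (B' \<union> (S - B'))"
    by (rule bij_betw_combine[OF on_B on_rest]) auto
  with assms have "bij_betw \<tau> S S"
    by (simp add: Un_absorb1)
  moreover have "\<tau> x = x" if "x \<notin> S" for x
    using assms that by (auto simp: \<tau>_def)
  ultimately have "\<tau> permutes S" by (rule bij_imp_permutes)
  with on_B show ?thesis by (auto simp: bij_betw_def)
qed

lemma card_permutes_image_eq_same:
  assumes "finite S" "B \<subseteq> S" "B' \<subseteq> S" "card B = card B'"
  shows "card {p. p permutes S \<and> p ` A = B} = card {p. p permutes S \<and> p ` A = B'}"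
proof -
  obtain \<tau> where \<tau>: "\<tau> permutes S" "\<tau> ` B = B'"
    using permutes_exists_image_eq[OF assms] by blast
  have inj: "inj_on ((\<circ>) \<tau>) {p. p permutes S \<and> p ` A = B}"
    using permutes_inj[OF \<tau>(1)] by (auto simp: inj_on_def inj_def fun_eq_iff)
  have "(\<circ>) \<tau> ` {p. p permutes S \<and> p ` A = B} = {p. p permutes S \<and> p ` A = B'}"
  proof (intro set_eqI iffI)
    fix q assume "q \<in> (\<circ>) \<tau> ` {p. p permutes S \<and> p ` A = B}"
    then obtain p where p: "p permutes S" "p ` A = B" "q = \<tau> \<circ> p" by blast
    have "q ` A = B'"
      unfolding p(3) image_comp[symmetric] p(2) \<tau>(2) ..
    with p \<tau> show "q \<in> {p. p permutes S \<and> p ` A = B'}"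
      by (simp add: permutes_compose)
  next
    fix q assume "q \<in> {p. p permutes S \<and> p ` A = B'}"
    then have q: "q permutes S" "q ` A = B'" by auto
    have "inv \<tau> ` B' = B"
      unfolding \<tau>(2)[symmetric] image_comp using permutes_inv_o(2)[OF \<tau>(1)] by simp
    then have "(inv \<tau> \<circ> q) ` A = B"
      unfolding image_comp[symmetric] q(2) .
    moreover have "inv \<tau> \<circ> q permutes S"
      using permutes_compose[OF q(1) permutes_inv[OF \<tau>(1)]] .
    moreover have "q = \<tau> \<circ> (inv \<tau> \<circ> q)"
      using permutes_inverses[OF \<tau>(1)] by (auto simp: fun_eq_iff)
    ultimately show "q \<in> (\<circ>) \<tau> ` {p. p permutes S \<and> p ` A = B}" by blast
  qed
  with card_image[OF inj] show ?thesis by simp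
qed

lemma card_permutes_image_eq:
  assumes "finite S" "A \<subseteq> S" "B \<subseteq> S" "card B = card A"
  shows "card {p. p permutes S \<and> p ` A = B} * (card S choose card A) = fact (card S)"
proof -
  define K where "K = {B. B \<subseteq> S \<and> card B = card A}"
  have images: "(\<lambda>p. p ` A) ` {p. p permutes S} \<subseteq> K"
    using assms(2) by (auto simp: K_def permutes_in_image card_image permutes_inj_on)
  have "fact (card S) = card {p. p permutes S}"
    using card_permutations[OF refl assms(1)] by simp
  also have "\<dots> = (\<Sum>B'\<in>K. card {p. p permutes S \<and> p ` A = B'})"
    using sum.group[OF finite_permutations[OF assms(1)] _ images, of "\<lambda>_. 1::nat"] assms(1)
    by (simp add: K_def)
  also have "\<dots> = (\<Sum>B'\<in>K. card {p. p permutes S \<and> p ` A = B})"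
    by (rule sum.cong[OF refl], rule card_permutes_image_eq_same) (use assms in \<open>auto simp: K_def\<close>)
  also have "\<dots> = (card S choose card A) * card {p. p permutes S \<and> p ` A = B}"
    using n_subsets[OF assms(1)] by (simp add: K_def)
  finally show ?thesis by simp
qed

lemma card_permutes_image_subset:
  assumes "finite S" "A \<subseteq> S" "T \<subseteq> S"
  shows "card {p. p permutes S \<and> p ` A \<subseteq> T} * (card S choose card A)
           = (card T choose card A) * fact (card S)"
proof -
  define P where "P = {p. p permutes S \<and> p ` A \<subseteq> T}"
  define K where "K = {B. B \<subseteq> T \<and> card B = card A}"
  have fin_T: "finite T" using finite_subset[OF assms(3,1)] .
  have fin_P: "finite P"
    unfolding P_def by (rule finite_subset[OF _ finite_permutations[OF assms(1)]]) auto
  have images: "(\<lambda>p. p ` A) ` P \<subseteq> K"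
    by (auto simp: P_def K_def card_image permutes_inj_on)
  have "card P * (card S choose card A) = (\<Sum>B\<in>K. card {p \<in> P. p ` A = B}) * (card S choose card A)"
    using sum.group[OF fin_P _ images, of "\<lambda>_. 1::nat"] fin_T by (simp add: K_def)
  also have "\<dots> = (\<Sum>B\<in>K. card {p. p permutes S \<and> p ` A = B} * (card S choose card A))"
    unfolding sum_distrib_right by (intro sum.cong) (auto simp: P_def K_def intro!: arg_cong[where f = card])
  also have "\<dots> = (\<Sum>B\<in>K. fact (card S))"
    by (rule sum.cong[OF refl], rule card_permutes_image_eq) (use assms in \<open>auto simp: K_def\<close>)
  also have "\<dots> = (card T choose card A) * fact (card S)"
    using n_subsets[OF fin_T] by (simp add: K_def)
  finally show ?thesis unfolding P_def .
qed

lemma card_permutes_hits_ge: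
  assumes "finite S" "X1 \<subseteq> S" "X2 \<subseteq> S"
  shows "card {p. p permutes S \<and> k \<le> card {i \<in> X1. p i \<in> X2}} * (card S choose k)
           \<le> (card X1 choose k) * (card X2 choose k) * fact (card S)"
proof -
  define K where "K = {A. A \<subseteq> X1 \<and> card A = k}"
  have fin_X1: "finite X1" using finite_subset[OF assms(2,1)] .
  have "{p. p permutes S \<and> k \<le> card {i \<in> X1. p i \<in> X2}}
          \<subseteq> (\<Union>A\<in>K. {p. p permutes S \<and> p ` A \<subseteq> X2})"
  proof safe
    fix p assume "p permutes S" "k \<le> card {i \<in> X1. p i \<in> X2}"
    moreover obtain A where "A \<subseteq> {i \<in> X1. p i \<in> X2}" "card A = k"
      using obtain_subset_with_card_n[OF \<open>k \<le> _\<close>] by metis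
    ultimately show "p \<in> (\<Union>A\<in>K. {p. p permutes S \<and> p ` A \<subseteq> X2})"
      unfolding K_def by blast
  qed
  then have "card {p. p permutes S \<and> k \<le> card {i \<in> X1. p i \<in> X2}}
      \<le> card (\<Union>A\<in>K. {p. p permutes S \<and> p ` A \<subseteq> X2})"
    by (rule card_mono[rotated]) (auto intro: finite_subset[OF _ finite_permutations[OF assms(1)]])
  also have "\<dots> \<le> (\<Sum>A\<in>K. card {p. p permutes S \<and> p ` A \<subseteq> X2})"
    by (rule card_UN_le) (simp add: K_def fin_X1)
  finally have "card {p. p permutes S \<and> k \<le> card {i \<in> X1. p i \<in> X2}} * (card S choose k)
      \<le> (\<Sum>A\<in>K. card {p. p permutes S \<and> p ` A \<subseteq> X2}) * (card S choose k)"
    by (rule mult_right_mono) simp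
  also have "\<dots> = (\<Sum>A\<in>K. card {p. p permutes S \<and> p ` A \<subseteq> X2} * (card S choose card A))"
    unfolding sum_distrib_right by (intro sum.cong) (simp_all add: K_def)
  also have "\<dots> = (\<Sum>A\<in>K. (card X2 choose card A) * fact (card S))"
    by (rule sum.cong[OF refl], rule card_permutes_image_subset)
      (use assms in \<open>auto simp: K_def\<close>)
  also have "\<dots> = (card X1 choose k) * (card X2 choose k) * fact (card S)"
    by (simp add: K_def n_subsets[OF fin_X1])
  finally show ?thesis .
qed

lemma binomial_mult_power_le:
  assumes "b \<le> (n::nat)"
  shows "(b choose k) * n ^ k \<le> (n choose k) * b ^ k"
proof (induction k)
  case 0
  then show ?case by simp
next
  case (Suc k)
  have absorb: "Suc k * (m choose Suc k) = (m - k) * (m choose k)" for m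
    by (metis binomial_absorption binomial_absorb_comp)
  have "(b - k) * n \<le> (n - k) * b"
  proof (cases "k \<le> b")
    case True
    have "(b - k) * n = b * n - k * n" by (simp add: diff_mult_distrib)
    also have "\<dots> \<le> b * n - k * b" using assms by (intro diff_le_mono2) simp
    also have "\<dots> = (n - k) * b" by (simp add: diff_mult_distrib mult.commute[of b n])
    finally show ?thesis .
  qed simp
  have "Suc k * ((b choose Suc k) * n ^ Suc k) = (Suc k * (b choose Suc k)) * (n * n ^ k)"
    by (simp only: power_Suc ac_simps)
  also have "\<dots> = ((b - k) * n) * ((b choose k) * n ^ k)"
    by (simp only: absorb ac_simps)
  also have "\<dots> \<le> ((n - k) * b) * ((n choose k) * b ^ k)"
    using \<open>(b - k) * n \<le> (n - k) * b\<close> Suc.IH by (rule mult_mono) auto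
  also have "\<dots> = (Suc k * (n choose Suc k)) * (b * b ^ k)"
    by (simp only: absorb ac_simps)
  also have "\<dots> = Suc k * ((n choose Suc k) * b ^ Suc k)"
    by (simp only: power_Suc ac_simps)
  finally show ?case by (simp only: mult_le_cancel1)
qed

lemma card_permutes_hits_ge_le_power:
  assumes "finite S" "X1 \<subseteq> S" "X2 \<subseteq> S"
  shows "card {p. p permutes S \<and> k \<le> card {i \<in> X1. p i \<in> X2}} * card S ^ k * fact k
           \<le> card X1 ^ k * card X2 ^ k * fact (card S)"
proof (cases "k \<le> card S")
  case True
  define c where "c = card {p. p permutes S \<and> k \<le> card {i \<in> X1. p i \<in> X2}}"
  have X2_le: "card X2 \<le> card S" using card_mono[OF assms(1,3)] .
  have "(card S choose k) * (c * card S ^ k * fact k)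
      = (c * (card S choose k)) * (card S ^ k * fact k)"
    by (simp only: ac_simps)
  also have "\<dots> \<le> ((card X1 choose k) * (card X2 choose k) * fact (card S)) * (card S ^ k * fact k)"
    using card_permutes_hits_ge[OF assms] unfolding c_def by (rule mult_right_mono) simp
  also have "\<dots> = ((card X1 choose k) * fact k) * ((card X2 choose k) * card S ^ k) * fact (card S)"
    by (simp only: ac_simps)
  also have "\<dots> \<le> card X1 ^ k * ((card S choose k) * card X2 ^ k) * fact (card S)"
    by (intro mult_mono binomial_fact_pow binomial_mult_power_le X2_le) auto
  also have "\<dots> = (card S choose k) * (card X1 ^ k * card X2 ^ k * fact (card S))"
    by (simp only: ac_simps)
  finally show ?thesis
    using True unfolding c_def by simp
next
  case False
  have "card {i \<in> X1. p i \<in> X2} < k" for p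
    using card_mono[OF finite_subset[OF assms(2,1)], of "{i \<in> X1. p i \<in> X2}"]
      card_mono[OF assms(1,2)] False by auto
  then have "{p. p permutes S \<and> k \<le> card {i \<in> X1. p i \<in> X2}} = {}"
    using leD by blast
  then show ?thesis by (simp only: card.empty mult_0 zero_le)
qed

lemma sum_permutes_hits:
  assumes "finite S" "X1 \<subseteq> S" "X2 \<subseteq> S"
  shows "(\<Sum>p | p permutes S. card {i \<in> X1. p i \<in> X2}) * card S
           = card X1 * card X2 * fact (card S)"
proof -
  have fin_X1: "finite X1" using finite_subset[OF assms(2,1)] .
  have "(\<Sum>p | p permutes S. card {i \<in> X1. p i \<in> X2})
      = (\<Sum>p | p permutes S. \<Sum>i\<in>X1. if p i \<in> X2 then 1 else 0)"
    using fin_X1 by (simp add: sum.If_cases Int_def)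
  also have "\<dots> = (\<Sum>i\<in>X1. card {p. p permutes S \<and> p ` {i} \<subseteq> X2})"
    using finite_permutations[OF assms(1)]
    by (subst sum.swap) (simp add: sum.If_cases Int_def conj_commute)
  finally have "(\<Sum>p | p permutes S. card {i \<in> X1. p i \<in> X2}) * card S
      = (\<Sum>i\<in>X1. card {p. p permutes S \<and> p ` {i} \<subseteq> X2} * (card S choose card {i}))"
    by (simp add: sum_distrib_right)
  also have "\<dots> = (\<Sum>i\<in>X1. (card X2 choose card {i}) * fact (card S))"
    by (rule sum.cong[OF refl], rule card_permutes_image_subset) (use assms in auto)
  also have "\<dots> = card X1 * card X2 * fact (card S)"
    by simp
  finally show ?thesis .
qed

lemma power_div_fact_le_exp:
  assumes "(x::real) \<ge> 0"
  shows "x ^ k / fact k \<le> exp x"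
proof -
  have exp_sums: "(\<lambda>n. x ^ n / fact n) sums exp x"
    using exp_converges[of x] by (simp add: divide_inverse mult.commute)
  have "(\<Sum>n\<in>{k}. x ^ n / fact n) \<le> (\<Sum>n. x ^ n / fact n)"
    by (rule sum_le_suminf) (use exp_sums assms in \<open>auto simp: sums_iff\<close>)
  then show ?thesis using exp_sums by (simp add: sums_iff)
qed

lemma exp_seven_quarters_less: "exp (7/4 :: real) < 7"
proof -
  have "exp (7/4::real) ^ 4 = exp 1 ^ 7"
    by (simp flip: exp_of_nat_mult)
  also have "\<dots> \<le> 3 ^ 7"
    using exp_le by (intro power_mono) auto
  also have "\<dots> < 7 ^ 4" by simp
  finally show ?thesis by (rule power_less_imp_less_base) simp
qed

lemma power_div_fact_le_exp_neg:
  fixes \<mu> :: real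
  assumes "\<mu> \<ge> 0" "7 * \<mu> \<le> real k"
  shows "\<mu> ^ k / fact k \<le> exp (- (3/4) * real k)"
proof -
  have "\<mu> ^ k / fact k \<le> (real k / 7) ^ k / fact k"
    using assms by (intro divide_right_mono power_mono) auto
  also have "\<dots> = (real k ^ k / fact k) / 7 ^ k" by (simp add: power_divide)
  also have "\<dots> \<le> exp (real k) / 7 ^ k"
    by (intro divide_right_mono power_div_fact_le_exp) auto
  also have "\<dots> \<le> exp (- (3/4) * real k)"
  proof -
    have "exp (real k) * exp (3/4 * real k) = exp (7/4) ^ k"
      by (simp flip: exp_add exp_of_nat_mult)
    also have "\<dots> \<le> 7 ^ k"
      using exp_seven_quarters_less by (intro power_mono) auto
    finally show ?thesis
      by (simp add: exp_minus field_simps)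
  qed
  finally show ?thesis .
qed

lemma card_X_pairs: "card (X_pairs X1 X2 p) = card {i \<in> X1. p i \<in> X2}"
proof -
  have "X_pairs X1 X2 p = (\<lambda>i. (i, p i)) ` {i \<in> X1. p i \<in> X2}"
    by (auto simp: X_pairs_def)
  then show ?thesis by (simp add: card_image inj_on_def)
qed

lemma expectation_pmf_of_permutations:
  fixes f :: "('a \<Rightarrow> 'a) \<Rightarrow> real"
  assumes "finite S"
  shows "measure_pmf.expectation (pmf_of_set {p. p permutes S}) f
           = (\<Sum>p | p permutes S. f p) / fact (card S)"
proof -
  have "{p. p permutes S} \<noteq> {}" using permutes_id by blast
  with assms show ?thesis
    by (simp add: integral_pmf_of_set finite_permutations card_permutations)
qed

lemma prob_pmf_of_permutations:
  assumes "finite S"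
  shows "measure_pmf.prob (pmf_of_set {p. p permutes S}) A
           = real (card {p. p permutes S \<and> p \<in> A}) / fact (card S)"
proof -
  have "{p. p permutes S} \<noteq> {}" using permutes_id by blast
  with assms show ?thesis
    by (simp add: measure_pmf_of_set finite_permutations card_permutations Int_def)
qed

lemma expectation_card_X_pairs:
  assumes "X1 \<subseteq> {1..N}" "X2 \<subseteq> {1..N}"
  shows "measure_pmf.expectation (unif_perm N) (\<lambda>\<sigma>. real (card (X_pairs X1 X2 \<sigma>)))
           = real (card X1) * real (card X2) / real N"
proof -
  let ?P = "{p. p permutes {1..N}}"
  have sum_hits: "(\<Sum>p\<in>?P. real (card {i \<in> X1. p i \<in> X2})) * real N
      = real (card X1) * real (card X2) * fact N"
    using arg_cong[OF sum_permutes_hits[OF _ assms], of real] by simp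
  have "measure_pmf.expectation (unif_perm N) (\<lambda>\<sigma>. real (card (X_pairs X1 X2 \<sigma>)))
      = (\<Sum>p\<in>?P. real (card {i \<in> X1. p i \<in> X2})) / fact N"
    by (simp add: unif_perm_def expectation_pmf_of_permutations card_X_pairs)
  also have "\<dots> = real (card X1) * real (card X2) / real N"
  proof (cases "N = 0")
    case True
    with assms have "X1 = {}" by auto
    then show ?thesis by simp
  next
    case False
    with sum_hits show ?thesis by (simp add: field_simps)
  qed
  finally show ?thesis .
qed

lemma prob_card_X_pairs_ge:
  assumes "X1 \<subseteq> {1..N}" "X2 \<subseteq> {1..N}"
  shows "measure_pmf.prob (unif_perm N) {\<pi>. k \<le> card (X_pairs X1 X2 \<pi>)}
           \<le> (real (card X1) * real (card X2) / real N) ^ k / fact k"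
proof (cases "N = 0")
  case True
  with assms show ?thesis by (cases k) (auto simp: X_pairs_def)
next
  case False
  let ?c = "card {p. p permutes {1..N} \<and> k \<le> card {i \<in> X1. p i \<in> X2}}"
  have "real ?c * (real N ^ k * fact k) \<le> (real (card X1) * real (card X2)) ^ k * fact N"
    using card_permutes_hits_ge_le_power[OF _ assms, of k]
    by (metis (mono_tags) card_atLeastAtMost diff_Suc_1 finite_atLeastAtMost mult.assoc
        of_nat_fact of_nat_le_iff of_nat_mult of_nat_power power_mult_distrib)
  then have "real ?c / fact N \<le> (real (card X1) * real (card X2)) ^ k / (real N ^ k * fact k)"
    using False by (simp add: divide_simps)
  then show ?thesis
    by (simp add: unif_perm_def prob_pmf_of_permutations card_X_pairs power_divide)
qed

theorem theorem3:
  fixes N :: nat and X1 X2 :: "nat set" and u \<mu> :: real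
  assumes "X1 \<subseteq> {1..N}" and "X2 \<subseteq> {1..N}"
    and "\<mu> = measure_pmf.expectation (unif_perm N) (\<lambda>\<sigma>. real (card (X_pairs X1 X2 \<sigma>)))"
    and "u \<ge> 6 * \<mu>"
  shows "measure_pmf.prob (unif_perm N) {\<pi>. real (card (X_pairs X1 X2 \<pi>)) \<ge> \<mu> + u}
           \<le> exp (- (3/4) * u)"
proof -
  have \<mu>: "\<mu> = real (card X1) * real (card X2) / real N"
    using expectation_card_X_pairs[OF assms(1,2)] assms(3) by simp
  then have "\<mu> \<ge> 0" by simp
  define k where "k = nat \<lceil>\<mu> + u\<rceil>"
  have k: "\<mu> + u \<le> real k"
    unfolding k_def by linarith
  have "{\<pi>. real (card (X_pairs X1 X2 \<pi>)) \<ge> \<mu> + u} = {\<pi>. k \<le> card (X_pairs X1 X2 \<pi>)}"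
    unfolding k_def by (simp add: nat_le_iff ceiling_le_iff)
  then have "measure_pmf.prob (unif_perm N) {\<pi>. real (card (X_pairs X1 X2 \<pi>)) \<ge> \<mu> + u}
      \<le> \<mu> ^ k / fact k"
    using prob_card_X_pairs_ge[OF assms(1,2)] \<mu> by simp
  also have "\<dots> \<le> exp (- (3/4) * real k)"
    using \<open>\<mu> \<ge> 0\<close> k assms(4) by (intro power_div_fact_le_exp_neg) auto
  also have "\<dots> \<le> exp (- (3/4) * u)"
    using k \<open>\<mu> \<ge> 0\<close> by simp
  finally show ?thesis .
qed

end
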